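(* Let $F$ be an algebraically closed field, $l>1$ an integer coprime to the characteristic of $F$, $\xi\in F$ a primitive $l$-th root of $1$, $m\ge1$, and $$Clg(l,m)=\langle x_1,\ldots,x_m \mid x_i^l=1;\ x_i^{-1}x_jx_i=\xi x_j \ (i<j);\ x_i^{-1}x_jx_i=\xi^{-1}x_j \ (i>j)\rangle.$$ Let $V$ be a subspace of $Clg(l,m)$ that is invariant under every automorphism of $Clg(l,m)$. Then $V$ is spanned by the ordered monomials $x_1^{k_1}\cdots x_m^{k_m}$ ($0\le k_i\le l-1$) that lie in $V$.
   Context: The ordered monomials $x_1^{k_1}x_2^{k_2}\cdots x_m^{k_m}$ with $0\le k_i\le l-1$ are the standard monomials of $Clg(l,m)$ (they form a basis of it). *)

theory Defs
  imports "HOL-Computational_Algebra.Polynomial"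
begin

text \<open>Concrete model of the generalized Clifford algebra Clg(l,m) over a field 'a.
  Generators are indexed 0..m-1 (instead of 1..m). An element is a coefficient function on
  exponent vectors k :: nat \<Rightarrow> nat with k i < l for i < m and k i = 0 for i \<ge> m;
  the function at k is the coefficient of the ordered monomial x_0^(k 0) ... x_(m-1)^(k (m-1)).
  From the relations x_j x_i = xi x_i x_j (i < j) and x_i^l = 1 one gets
  x^a x^b = xi^(sum over i<j of a_j b_i) x^((a+b) mod l).\<close>

definition clg_idx :: "nat \<Rightarrow> nat \<Rightarrow> (nat \<Rightarrow> nat) set" where
  "clg_idx l m = {k. (\<forall>i<m. k i < l) \<and> (\<forall>i\<ge>m. k i = 0)}"

definition clg_carrier :: "nat \<Rightarrow> nat \<Rightarrow> ((nat \<Rightarrow> nat) \<Rightarrow> 'a::field) set" where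
  "clg_carrier l m = {f. \<forall>k. k \<notin> clg_idx l m \<longrightarrow> f k = 0}"

definition clg_mono :: "(nat \<Rightarrow> nat) \<Rightarrow> ((nat \<Rightarrow> nat) \<Rightarrow> 'a::field)" where
  "clg_mono k = (\<lambda>c. if c = k then 1 else 0)"

definition clg_one :: "(nat \<Rightarrow> nat) \<Rightarrow> 'a::field" where
  "clg_one = clg_mono (\<lambda>_. 0)"

definition clg_add :: "((nat \<Rightarrow> nat) \<Rightarrow> 'a::field) \<Rightarrow> ((nat \<Rightarrow> nat) \<Rightarrow> 'a) \<Rightarrow> ((nat \<Rightarrow> nat) \<Rightarrow> 'a)" where
  "clg_add f g = (\<lambda>k. f k + g k)"

definition clg_smult :: "'a::field \<Rightarrow> ((nat \<Rightarrow> nat) \<Rightarrow> 'a) \<Rightarrow> ((nat \<Rightarrow> nat) \<Rightarrow> 'a)" where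
  "clg_smult c f = (\<lambda>k. c * f k)"

definition clg_mult :: "nat \<Rightarrow> nat \<Rightarrow> 'a::field \<Rightarrow>
    ((nat \<Rightarrow> nat) \<Rightarrow> 'a) \<Rightarrow> ((nat \<Rightarrow> nat) \<Rightarrow> 'a) \<Rightarrow> ((nat \<Rightarrow> nat) \<Rightarrow> 'a)" where
  "clg_mult l m \<xi> f g = (\<lambda>c. if c \<in> clg_idx l m then
      (\<Sum>a\<in>clg_idx l m. \<Sum>b\<in>clg_idx l m.
         if (\<forall>i. c i = (a i + b i) mod l)
         then \<xi> ^ (\<Sum>i<m. \<Sum>j<m. if i < j then a j * b i else 0) * f a * g b
         else 0)
      else 0)"

definition clg_aut :: "nat \<Rightarrow> nat \<Rightarrow> 'a::field \<Rightarrow>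
    (((nat \<Rightarrow> nat) \<Rightarrow> 'a) \<Rightarrow> ((nat \<Rightarrow> nat) \<Rightarrow> 'a)) \<Rightarrow> bool" where
  "clg_aut l m \<xi> \<phi> \<longleftrightarrow>
     bij_betw \<phi> (clg_carrier l m) (clg_carrier l m) \<and>
     (\<forall>f\<in>clg_carrier l m. \<forall>g\<in>clg_carrier l m. \<phi> (clg_add f g) = clg_add (\<phi> f) (\<phi> g)) \<and>
     (\<forall>c. \<forall>f\<in>clg_carrier l m. \<phi> (clg_smult c f) = clg_smult c (\<phi> f)) \<and>
     (\<forall>f\<in>clg_carrier l m. \<forall>g\<in>clg_carrier l m.
        \<phi> (clg_mult l m \<xi> f g) = clg_mult l m \<xi> (\<phi> f) (\<phi> g)) \<and>
     \<phi> clg_one = clg_one"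

definition clg_subspace :: "nat \<Rightarrow> nat \<Rightarrow> ((nat \<Rightarrow> nat) \<Rightarrow> 'a::field) set \<Rightarrow> bool" where
  "clg_subspace l m V \<longleftrightarrow> V \<subseteq> clg_carrier l m \<and> (\<lambda>_. 0) \<in> V \<and>
     (\<forall>f\<in>V. \<forall>g\<in>V. clg_add f g \<in> V) \<and> (\<forall>c. \<forall>f\<in>V. clg_smult c f \<in> V)"

definition clg_span :: "((nat \<Rightarrow> nat) \<Rightarrow> 'a::field) set \<Rightarrow> ((nat \<Rightarrow> nat) \<Rightarrow> 'a) set" where
  "clg_span S = {f. \<exists>T c. finite T \<and> T \<subseteq> S \<and> f = (\<lambda>k. \<Sum>s\<in>T. c s * s k)}"

definition alg_closed_field :: "'a::field itself \<Rightarrow> bool" where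
  "alg_closed_field _ \<longleftrightarrow> (\<forall>p :: 'a poly. degree p > 0 \<longrightarrow> (\<exists>x. poly p x = 0))"

definition primitive_root :: "nat \<Rightarrow> 'a::field \<Rightarrow> bool" where
  "primitive_root l \<xi> \<longleftrightarrow> \<xi> ^ l = 1 \<and> (\<forall>k. 0 < k \<and> k < l \<longrightarrow> \<xi> ^ k \<noteq> 1)"

end

theory Submission
  imports Defs
begin

(* For an l-th root of unity \<zeta>, the automorphism x_i \<mapsto> \<zeta> x_i acts diagonally on the standard
  monomials, scaling x^k by \<zeta>^(k_i). As \<xi> is primitive, two distinct standard monomials x^k, x^k'
  are separated by the eigenvalue \<xi>^(k_i) for some i; so for f in V, applying x_i \<mapsto> \<xi> x_i to f
  and subtracting \<xi>^(k'_i) f gives an element of V that loses the coefficient of x^k' and keeps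
  that of x^k. Induction on the size of the support puts every monomial occurring in an element of
  V into V. *)

definition clg_scale :: "'a::field \<Rightarrow> nat \<Rightarrow> ((nat \<Rightarrow> nat) \<Rightarrow> 'a) \<Rightarrow> ((nat \<Rightarrow> nat) \<Rightarrow> 'a)" where
  "clg_scale \<zeta> i f = (\<lambda>k. \<zeta> ^ k i * f k)"

definition clg_support :: "nat \<Rightarrow> nat \<Rightarrow> ((nat \<Rightarrow> nat) \<Rightarrow> 'a::field) \<Rightarrow> (nat \<Rightarrow> nat) set" where
  "clg_support l m f = {k \<in> clg_idx l m. f k \<noteq> 0}"

lemma power_mod_eq_of_power_eq_1:
  fixes \<zeta> :: "'a::monoid_mult"
  assumes "\<zeta> ^ l = 1"
  shows "\<zeta> ^ (n mod l) = \<zeta> ^ n"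
  by (metis assms div_mult_mod_eq mult.commute mult_1 power_add power_mult power_one)

lemma finite_clg_idx: "finite (clg_idx l m)"
proof (rule finite_subset)
  show "clg_idx l m \<subseteq> {k. \<forall>i. (i \<in> {..<m} \<longrightarrow> k i \<in> {..<l}) \<and> (i \<notin> {..<m} \<longrightarrow> k i = 0)}"
    by (simp add: clg_idx_def subset_iff)
qed (intro finite_set_of_finite_funs finite_lessThan)

lemma clg_scale_clg_scale: "clg_scale \<zeta> i (clg_scale \<eta> i f) = clg_scale (\<zeta> * \<eta>) i f"
  by (simp add: clg_scale_def power_mult_distrib mult.assoc)

lemma clg_scale_1 [simp]: "clg_scale 1 i f = f"
  by (simp add: clg_scale_def)

lemma clg_scale_mult:
  fixes \<zeta> :: "'a::field"
  assumes "\<zeta> ^ l = 1"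
  shows "clg_scale \<zeta> i (clg_mult l m \<xi> f g) = clg_mult l m \<xi> (clg_scale \<zeta> i f) (clg_scale \<zeta> i g)"
proof
  fix c
  have "\<zeta> ^ c i = \<zeta> ^ a i * \<zeta> ^ b i" if "\<forall>j. c j = (a j + b j) mod l" for a b
    using that power_mod_eq_of_power_eq_1[OF assms, of "a i + b i"] by (simp add: power_add)
  then show "clg_scale \<zeta> i (clg_mult l m \<xi> f g) c = clg_mult l m \<xi> (clg_scale \<zeta> i f) (clg_scale \<zeta> i g) c"
    by (auto simp: clg_scale_def clg_mult_def sum_distrib_left mult_ac intro!: sum.cong)
qed

lemma clg_aut_clg_scale:
  fixes \<zeta> :: "'a::field"
  assumes "\<zeta> ^ l = 1" and "l > 0"
  shows "clg_aut l m \<xi> (clg_scale \<zeta> i)"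
proof -
  have "\<zeta> * \<zeta> ^ (l - 1) = 1"
    using assms by (metis power_eq_if not_gr0)
  then obtain \<eta> where "\<zeta> * \<eta> = 1"
    by blast
  then have inverse: "clg_scale \<zeta> i (clg_scale \<eta> i f) = f" "clg_scale \<eta> i (clg_scale \<zeta> i f) = f"
    for f :: "(nat \<Rightarrow> nat) \<Rightarrow> 'a"
    by (simp_all add: clg_scale_clg_scale mult.commute)
  have carrier: "clg_scale \<eta> i f \<in> clg_carrier l m" if "f \<in> clg_carrier l m" for \<eta> f
    using that by (simp add: clg_carrier_def clg_scale_def)
  have "bij_betw (clg_scale \<zeta> i) (clg_carrier l m) (clg_carrier l m)"
    by (rule bij_betw_byWitness[where f'="clg_scale \<eta> i"])
      (auto simp: inverse carrier)
  moreover have "clg_scale \<zeta> i (clg_add f g) = clg_add (clg_scale \<zeta> i f) (clg_scale \<zeta> i g)" for f g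
    by (simp add: clg_scale_def clg_add_def distrib_left)
  moreover have "clg_scale \<zeta> i (clg_smult c f) = clg_smult c (clg_scale \<zeta> i f)" for c f
    by (simp add: clg_scale_def clg_smult_def mult.left_commute)
  moreover have "clg_scale \<zeta> i clg_one = clg_one"
    by (simp add: clg_scale_def clg_one_def clg_mono_def fun_eq_iff)
  ultimately show ?thesis
    unfolding clg_aut_def by (simp add: clg_scale_mult[OF assms(1)])
qed

lemma primitive_root_power_inj:
  fixes \<xi> :: "'a::field"
  assumes "primitive_root l \<xi>"
  shows "inj_on (\<lambda>k. \<xi> ^ k) {..<l}"
proof -
  have "\<xi> ^ a \<noteq> \<xi> ^ b" if "a < b" "b < l" for a b
  proof
    assume eq: "\<xi> ^ a = \<xi> ^ b"
    have "\<xi> ^ l = 1"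
      using assms by (simp add: primitive_root_def)
    then have "\<xi> \<noteq> 0"
      using that by (auto simp: power_0_left)
    moreover have "\<xi> ^ b = \<xi> ^ a * \<xi> ^ (b - a)"
      using that by (simp flip: power_add)
    ultimately have "\<xi> ^ (b - a) = 1"
      using eq by simp
    then show False
      using assms that unfolding primitive_root_def by simp
  qed
  then show ?thesis
    by (intro inj_onI) (metis lessThan_iff linorder_neqE_nat)
qed

lemma clg_support_scale_diff:
  "clg_support l m (clg_add (clg_scale \<zeta> i f) (clg_smult (- (\<zeta> ^ j)) f))
     = {k \<in> clg_support l m f. \<zeta> ^ k i \<noteq> \<zeta> ^ j}"
  by (auto simp: clg_support_def clg_add_def clg_scale_def clg_smult_def algebra_simps)

lemma clg_support_singleton:
  assumes "f \<in> clg_carrier l m" and "clg_support l m f = {k}"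
  shows "f = clg_smult (f k) (clg_mono k)"
  using assms unfolding clg_carrier_def clg_support_def
  by (fastforce simp: clg_smult_def clg_mono_def)

lemma clg_mono_mem_subspace:
  fixes \<xi> :: "'a::field"
  assumes "primitive_root l \<xi>" and "clg_subspace l m V"
    and scale_closed: "\<And>i f. f \<in> V \<Longrightarrow> clg_scale \<xi> i f \<in> V"
    and "f \<in> V" and "k \<in> clg_support l m f"
  shows "clg_mono k \<in> V"
  using assms(4,5)
proof (induction "card (clg_support l m f)" arbitrary: f rule: less_induct)
  case less
  have f_carrier: "f \<in> clg_carrier l m"
    using assms(2) less.prems(1) by (auto simp: clg_subspace_def)
  show ?case
  proof (cases "clg_support l m f = {k}")
    case True
    have "f k \<noteq> 0"
      using less.prems(2) by (simp add: clg_support_def)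
    then have "clg_mono k = clg_smult (inverse (f k)) (clg_smult (f k) (clg_mono k))"
      by (simp add: clg_smult_def fun_eq_iff)
    also have "\<dots> = clg_smult (inverse (f k)) f"
      by (simp only: clg_support_singleton[OF f_carrier True, symmetric])
    also have "\<dots> \<in> V"
      using assms(2) less.prems(1) by (simp add: clg_subspace_def)
    finally show ?thesis .
  next
    case False
    then obtain k' where k': "k' \<in> clg_support l m f" "k' \<noteq> k"
      using less.prems(2) by blast
    have idx: "k \<in> clg_idx l m" "k' \<in> clg_idx l m"
      using k'(1) less.prems(2) by (simp_all add: clg_support_def)
    obtain i where i: "k i \<noteq> k' i"
      using k'(2) by (metis ext)
    have "i < m"
    proof (rule ccontr)
      assume "\<not> i < m"
      then have "k i = 0" "k' i = 0"
        using idx by (simp_all add: clg_idx_def)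
      with i show False
        by simp
    qed
    then have "k i \<in> {..<l}" "k' i \<in> {..<l}"
      using idx by (simp_all add: clg_idx_def)
    with i have root_ne: "\<xi> ^ k i \<noteq> \<xi> ^ k' i"
      using inj_onD[OF primitive_root_power_inj[OF assms(1)]] by blast
    define g where "g = clg_add (clg_scale \<xi> i f) (clg_smult (- (\<xi> ^ k' i)) f)"
    have "clg_support l m g \<subset> clg_support l m f"
      unfolding g_def clg_support_scale_diff using k'(1) by blast
    then have "card (clg_support l m g) < card (clg_support l m f)"
      by (intro psubset_card_mono) (simp add: clg_support_def finite_clg_idx)
    moreover have "g \<in> V"
      using assms(2) scale_closed[OF less.prems(1)] less.prems(1)
      unfolding g_def clg_subspace_def by simp
    moreover have "k \<in> clg_support l m g"
      unfolding g_def clg_support_scale_diff using less.prems(2) root_ne by blast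
    ultimately show ?thesis
      by (rule less.hyps)
  qed
qed

lemma clg_span_mono: "S \<subseteq> T \<Longrightarrow> clg_span S \<subseteq> clg_span T"
  unfolding clg_span_def by blast

lemma clg_span_subset_subspace:
  assumes "clg_subspace l m V" and "S \<subseteq> V"
  shows "clg_span S \<subseteq> V"
proof
  fix f assume "f \<in> clg_span S"
  then obtain T c where "finite T" "T \<subseteq> V" and f: "f = (\<lambda>k. \<Sum>s\<in>T. c s * s k)"
    using assms(2) unfolding clg_span_def by blast
  then show "f \<in> V"
  proof (induction T arbitrary: f rule: finite_induct)
    case empty
    then show ?case using assms(1) by (simp add: clg_subspace_def)
  next
    case (insert s T)
    have "f = clg_add (clg_smult (c s) s) (\<lambda>k. \<Sum>s\<in>T. c s * s k)"
      using insert by (simp add: clg_add_def clg_smult_def)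
    then show ?case
      using insert assms(1) unfolding clg_subspace_def by auto
  qed
qed

lemma clg_mono_inj: "inj clg_mono"
  by (intro injI) (metis clg_mono_def one_neq_zero)

lemma clg_carrier_in_span_support:
  assumes "f \<in> clg_carrier l m"
  shows "f \<in> clg_span (clg_mono ` clg_support l m f)"
proof -
  let ?S = "clg_support l m f"
  have "finite ?S"
    by (simp add: clg_support_def finite_clg_idx)
  have expansion: "(\<lambda>c. \<Sum>s\<in>clg_mono ` ?S. f (inv clg_mono s) * s c) = f"
  proof
    fix c
    have "(\<Sum>s\<in>clg_mono ` ?S. f (inv clg_mono s) * s c) = (\<Sum>j\<in>?S. f j * clg_mono j c)"
      by (simp add: sum.reindex inj_on_subset[OF clg_mono_inj])
    also have "\<dots> = (\<Sum>j\<in>?S. if j = c then f c else 0)"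
      by (intro sum.cong) (auto simp: clg_mono_def)
    also have "\<dots> = f c"
      using assms \<open>finite ?S\<close> by (auto simp: clg_support_def clg_carrier_def)
    finally show "(\<Sum>s\<in>clg_mono ` ?S. f (inv clg_mono s) * s c) = f c" .
  qed
  show ?thesis
    unfolding clg_span_def
    by (intro CollectI exI[of _ "clg_mono ` ?S"] exI[of _ "\<lambda>s. f (inv clg_mono s)"] conjI)
      (simp_all add: \<open>finite ?S\<close> expansion)
qed

theorem lemma2:
  fixes \<xi> :: "'a::field" and l m :: nat and V :: "((nat \<Rightarrow> nat) \<Rightarrow> 'a) set"
  assumes "alg_closed_field TYPE('a)"
    and "l > 1"
    and "CHAR('a) = 0 \<or> coprime l CHAR('a)"
    and "primitive_root l \<xi>"
    and "m \<ge> 1"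
    and "clg_subspace l m V"
    and "\<And>\<phi>. clg_aut l m \<xi> \<phi> \<Longrightarrow> \<phi> ` V \<subseteq> V"
  shows "V = clg_span (clg_mono ` {k \<in> clg_idx l m. clg_mono k \<in> V})"
proof
  let ?M = "{k \<in> clg_idx l m. clg_mono k \<in> V}"
  show "clg_span (clg_mono ` ?M) \<subseteq> V"
    using assms(6) by (intro clg_span_subset_subspace) auto
  have "\<xi> ^ l = 1" "l > 0"
    using assms(2,4) by (simp_all add: primitive_root_def)
  then have "clg_scale \<xi> i ` V \<subseteq> V" for i
    by (intro assms(7) clg_aut_clg_scale)
  then have scale_closed: "clg_scale \<xi> i f \<in> V" if "f \<in> V" for i f
    using that by blast
  show "V \<subseteq> clg_span (clg_mono ` ?M)"
  proof
    fix f assume "f \<in> V"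
    then have "f \<in> clg_carrier l m"
      using assms(6) by (auto simp: clg_subspace_def)
    then have "f \<in> clg_span (clg_mono ` clg_support l m f)"
      by (rule clg_carrier_in_span_support)
    also have "clg_support l m f \<subseteq> ?M"
      using clg_mono_mem_subspace[OF assms(4,6) scale_closed \<open>f \<in> V\<close>]
      by (auto simp: clg_support_def)
    then have "clg_span (clg_mono ` clg_support l m f) \<subseteq> clg_span (clg_mono ` ?M)"
      by (intro clg_span_mono image_mono)
    finally show "f \<in> clg_span (clg_mono ` ?M)" .
  qed
qed

end
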